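(* Let $\mathbb O=\{0,1,\dots,M\}$ with integer $M\ge1$, and $\theta=0$. For every $x(0)\in\mathbb O^n$: if there exists a finite legal update sequence from $x(0)$ along which the trajectory reaches the consensus state $(0,\dots,0)$, then there exists a finite legal update sequence from $x(0)$ along which the system reaches a state $y$ (not necessarily an equilibrium) with $y_i=1$ for every $i$ with $x_i(0)>0$.
   Context: Let $n\ge1$, $\mathcal V=\{1,\dots,n\}$, and let $W=(w_{ij})$ be an $n\times n$ row-stochastic matrix. For $x\in\mathbb O^n$, $i\in\mathcal V$, $z\in\mathbb O$, define $C^i_{\mathrm{social}}(z;x)=\sum_{j=1}^n w_{ij}|z-x_j|$ and $P_i(x)=\{z\in\mathbb O: C^i_{\mathrm{social}}(z;x)\le C^i_{\mathrm{social}}(x_i;x),\ |z-\theta|\le |x_i-\theta|\}$. A legal update sequence from $x(0)$ is a finite sequence $(i_1,z_1),\dots,(i_T,z_T)$ with $i_t\in\mathcal V$, generating $x(1),\dots,x(T)$ where $x(t)$ is obtained from $x(t-1)$ by setting coordinate $i_t$ to $z_t$, such that $z_t\in P_{i_t}(x(t-1))$ for every $t$. *)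

theory Defs
  imports Complex_Main
begin

text \<open>Agents are indexed by {1..n}; a state is a function nat => int whose
  coordinates outside {1..n} are irrelevant. The opinion set is O = {0..M}.
  W is given as a function w :: nat => nat => real.\<close>

definition row_stochastic :: "nat \<Rightarrow> (nat \<Rightarrow> nat \<Rightarrow> real) \<Rightarrow> bool" where
  "row_stochastic n w \<longleftrightarrow>
     (\<forall>i\<in>{1..n}. (\<forall>j\<in>{1..n}. w i j \<ge> 0) \<and> (\<Sum>j=1..n. w i j) = 1)"

definition C_social :: "nat \<Rightarrow> (nat \<Rightarrow> nat \<Rightarrow> real) \<Rightarrow> nat \<Rightarrow> int \<Rightarrow> (nat \<Rightarrow> int) \<Rightarrow> real" where
  "C_social n w i z x = (\<Sum>j=1..n. w i j * real_of_int \<bar>z - x j\<bar>)"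

definition P_set :: "nat \<Rightarrow> (nat \<Rightarrow> nat \<Rightarrow> real) \<Rightarrow> int \<Rightarrow> int \<Rightarrow> nat \<Rightarrow> (nat \<Rightarrow> int) \<Rightarrow> int set" where
  "P_set n w M \<theta> i x = {z \<in> {0..M}. C_social n w i z x \<le> C_social n w i (x i) x
                                   \<and> \<bar>z - \<theta>\<bar> \<le> \<bar>x i - \<theta>\<bar>}"

definition run :: "(nat \<Rightarrow> int) \<Rightarrow> (nat \<times> int) list \<Rightarrow> nat \<Rightarrow> (nat \<Rightarrow> int)" where
  "run x0 seq t = foldl (\<lambda>x (i, z). x(i := z)) x0 (take t seq)"

definition legal_seq :: "nat \<Rightarrow> (nat \<Rightarrow> nat \<Rightarrow> real) \<Rightarrow> int \<Rightarrow> int \<Rightarrow> (nat \<Rightarrow> int) \<Rightarrow> (nat \<times> int) list \<Rightarrow> bool" where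
  "legal_seq n w M \<theta> x0 seq \<longleftrightarrow>
     (\<forall>t < length seq. fst (seq ! t) \<in> {1..n} \<and>
                       snd (seq ! t) \<in> P_set n w M \<theta> (fst (seq ! t)) (run x0 seq t))"

end

theory Submission
  imports Defs
begin

text \<open>Take a legal sequence that reaches consensus at 0 and replay it with the opinion of every
  initially positive agent floored at 1, both in the moves and hence in the states. Along a legal
  sequence opinions stay in \<open>{0..M}\<close> and only move towards \<open>\<theta> = 0\<close>, so the floor raises
  exactly those initially positive agents that currently sit at 0. For every target \<open>v \<ge> 1\<close> this
  lowers the social cost by the same amount, so comparisons between such targets are unaffected.
  A move of an agent at \<open>x\<^sub>i \<ge> 1\<close> to 0 becomes a move to 1, which is still legal because the
  social cost is convex: \<open>C(0) \<le> C(x\<^sub>i)\<close> forces \<open>C(1) \<le> C(x\<^sub>i)\<close>.\<close>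

definition lift_to_one :: "nat \<Rightarrow> (nat \<Rightarrow> int) \<Rightarrow> nat \<Rightarrow> int \<Rightarrow> int" where
  "lift_to_one n x0 j v = (if j \<in> {1..n} \<and> 0 < x0 j then max v 1 else v)"

lemma run_Suc:
  assumes "t < length seq"
  shows "run x0 seq (Suc t) = (run x0 seq t)(fst (seq ! t) := snd (seq ! t))"
  using assms by (simp add: run_def take_Suc_conv_app_nth split: prod.splits)

lemma foldl_fun_upd_map_pointwise:
  "foldl (\<lambda>x (i, z). x(i := z)) (\<lambda>j. f j (x j)) (map (\<lambda>(i, z). (i, f i z)) l)
   = (\<lambda>j. f j (foldl (\<lambda>x (i, z). x(i := z)) x l j))"
proof (induction l arbitrary: x)
  case Nil
  then show ?case by simp
next
  case (Cons p l)
  obtain i z where p: "p = (i, z)" by (cases p)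
  have "(\<lambda>j. f j (x j))(i := f i z) = (\<lambda>j. f j ((x(i := z)) j))" by auto
  then show ?case using Cons.IH[of "x(i := z)"] by (simp only: p list.map foldl_Cons prod.case)
qed

lemma run_map_pointwise:
  assumes "\<forall>j. f j (x0 j) = x0 j"
  shows "run x0 (map (\<lambda>(i, z). (i, f i z)) seq) t = (\<lambda>j. f j (run x0 seq t j))"
proof -
  have "x0 = (\<lambda>j. f j (x0 j))" using assms by simp
  then show ?thesis
    using foldl_fun_upd_map_pointwise[of f x0 "take t seq"] by (simp add: run_def take_map)
qed

lemma legal_seq_run_bounds:
  assumes legal: "legal_seq n w M \<theta> x0 seq" and x0: "\<forall>i\<in>{1..n}. x0 i \<in> {0..M}"
    and "t \<le> length seq" and "j \<in> {1..n}"
  shows "run x0 seq t j \<in> {0..M} \<and> \<bar>run x0 seq t j - \<theta>\<bar> \<le> \<bar>x0 j - \<theta>\<bar>"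
  using \<open>t \<le> length seq\<close> \<open>j \<in> {1..n}\<close>
proof (induction t arbitrary: j)
  case 0
  then show ?case using x0 by (simp add: run_def)
next
  case (Suc t)
  then have t: "t < length seq" by simp
  let ?i = "fst (seq ! t)" and ?x = "run x0 seq t"
  from legal t have "?i \<in> {1..n}" and "snd (seq ! t) \<in> P_set n w M \<theta> ?i ?x"
    unfolding legal_seq_def by auto
  then show ?case
    using Suc t run_Suc[OF t, of x0] unfolding P_set_def by fastforce
qed

lemma abs_sub_convex:
  fixes a b c y :: real
  assumes "a \<le> b" "b \<le> c"
  shows "(c - a) * \<bar>b - y\<bar> \<le> (c - b) * \<bar>a - y\<bar> + (b - a) * \<bar>c - y\<bar>"
proof -
  have combination: "(c - a) * (b - y) = (c - b) * (a - y) + (b - a) * (c - y)"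
    by (simp add: algebra_simps)
  have "(c - a) * \<bar>b - y\<bar> = \<bar>(c - b) * (a - y) + (b - a) * (c - y)\<bar>"
    using assms by (simp add: abs_mult flip: combination)
  also have "\<dots> \<le> \<bar>(c - b) * (a - y)\<bar> + \<bar>(b - a) * (c - y)\<bar>"
    by (rule abs_triangle_ineq)
  also have "\<dots> = (c - b) * \<bar>a - y\<bar> + (b - a) * \<bar>c - y\<bar>"
    using assms by (simp add: abs_mult)
  finally show ?thesis .
qed

lemma C_social_convex:
  assumes w: "\<forall>j\<in>{1..n}. 0 \<le> w i j" and "a \<le> b" "b \<le> c"
  shows "real_of_int (c - a) * C_social n w i b x
         \<le> real_of_int (c - b) * C_social n w i a x + real_of_int (b - a) * C_social n w i c x"
  unfolding C_social_def sum_distrib_left sum.distrib[symmetric]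
proof (rule sum_mono)
  fix j assume "j \<in> {1..n}"
  then have "w i j * (real_of_int (c - a) * \<bar>b - x j\<bar>)
      \<le> w i j * (real_of_int (c - b) * \<bar>a - x j\<bar> + real_of_int (b - a) * \<bar>c - x j\<bar>)"
    using w abs_sub_convex[of a b c "x j"] assms(2,3) by (intro mult_left_mono) auto
  then show "real_of_int (c - a) * (w i j * real_of_int \<bar>b - x j\<bar>)
      \<le> real_of_int (c - b) * (w i j * real_of_int \<bar>a - x j\<bar>)
         + real_of_int (b - a) * (w i j * real_of_int \<bar>c - x j\<bar>)"
    by (simp add: algebra_simps)
qed

lemma C_social_one_le:
  assumes "\<forall>j\<in>{1..n}. 0 \<le> w i j" and "1 \<le> k"
    and "C_social n w i 0 x \<le> C_social n w i k x"
  shows "C_social n w i 1 x \<le> C_social n w i k x"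
proof -
  have "real_of_int k * C_social n w i 1 x
        \<le> real_of_int (k - 1) * C_social n w i 0 x + C_social n w i k x"
    using C_social_convex[of n w i 0 1 k x] assms(1,2) by simp
  also have "\<dots> \<le> real_of_int k * C_social n w i k x"
    using assms(2,3) mult_left_mono[OF assms(3), of "real_of_int (k - 1)"]
    by (simp add: algebra_simps)
  finally show ?thesis using assms(2) by simp
qed

lemma C_social_lift_to_one:
  assumes "1 \<le> v" and "\<forall>j\<in>{1..n}. 0 \<le> x j"
  shows "C_social n w i v (\<lambda>j. lift_to_one n x0 j (x j))
         = C_social n w i v x - (\<Sum>j=1..n. if 0 < x0 j \<and> x j = 0 then w i j else 0)"
  unfolding C_social_def sum_subtractf[symmetric]
proof (rule sum.cong)
  fix j assume "j \<in> {1..n}"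
  moreover have "x j = 0 \<or> 1 \<le> x j" using assms(2) \<open>j \<in> {1..n}\<close> by force
  ultimately show "w i j * real_of_int \<bar>v - lift_to_one n x0 j (x j)\<bar>
      = w i j * real_of_int \<bar>v - x j\<bar> - (if 0 < x0 j \<and> x j = 0 then w i j else 0)"
    using assms(1) by (auto simp: lift_to_one_def algebra_simps)
qed simp

lemma P_set_self:
  assumes "x i \<in> {0..M}"
  shows "x i \<in> P_set n w M \<theta> i x"
  using assms by (simp add: P_set_def)

lemma lift_to_one_in_P_set:
  assumes w: "\<forall>j\<in>{1..n}. 0 \<le> w i j" and "1 \<le> M" and i: "i \<in> {1..n}"
    and x: "\<forall>j\<in>{1..n}. 0 \<le> x j \<and> x j \<le> x0 j"
    and z: "z \<in> P_set n w M 0 i x"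
  shows "lift_to_one n x0 i z \<in> P_set n w M 0 i (\<lambda>j. lift_to_one n x0 j (x j))"
    (is "_ \<in> P_set n w M 0 i ?x'")
proof (cases "x i = 0")
  case True
  then have "lift_to_one n x0 i z = ?x' i" using z by (simp add: P_set_def)
  moreover have "?x' i \<in> {0..M}" using True \<open>1 \<le> M\<close> by (simp add: lift_to_one_def)
  ultimately show ?thesis using P_set_self by metis
next
  case False
  then have xi: "1 \<le> x i" "0 < x0 i" using x i by force+
  then have lift_z: "lift_to_one n x0 i z = max z 1" and lift_xi: "?x' i = x i"
    using i by (auto simp: lift_to_one_def)
  have z_bounds: "0 \<le> z" "z \<le> M" "z \<le> x i" and cost: "C_social n w i z x \<le> C_social n w i (x i) x"
    using z x i by (auto simp: P_set_def)
  have "C_social n w i (max z 1) x \<le> C_social n w i (x i) x"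
  proof (cases "z = 0")
    case True
    then show ?thesis using C_social_one_le[of n w i "x i" x] w xi(1) cost by simp
  next
    case False
    then have "max z 1 = z" using z_bounds(1) by arith
    then show ?thesis using cost by simp
  qed
  moreover have "\<forall>j\<in>{1..n}. 0 \<le> x j" using x by blast
  ultimately have "C_social n w i (max z 1) ?x' \<le> C_social n w i (x i) ?x'"
    using C_social_lift_to_one[of "max z 1" n x] C_social_lift_to_one[of "x i" n x] xi(1)
    by simp
  moreover have "max z 1 \<in> {0..M}" "\<bar>max z 1 - 0\<bar> \<le> \<bar>x i - 0\<bar>"
    using xi(1) z_bounds \<open>1 \<le> M\<close> by auto
  ultimately show ?thesis
    unfolding P_set_def lift_z mem_Collect_eq lift_xi by (intro conjI)
qed

lemma legal_seq_lift_to_one: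
  assumes w: "row_stochastic n w" and "1 \<le> M" and x0: "\<forall>i\<in>{1..n}. x0 i \<in> {0..M}"
    and legal: "legal_seq n w M 0 x0 seq"
  shows "legal_seq n w M 0 x0 (map (\<lambda>(i, z). (i, lift_to_one n x0 i z)) seq)"
    (is "legal_seq n w M 0 x0 ?lifted")
  unfolding legal_seq_def
proof (intro allI impI)
  fix t assume "t < length ?lifted"
  then have t: "t < length seq" by simp
  obtain i z where step: "seq ! t = (i, z)" by (cases "seq ! t")
  with legal t have i: "i \<in> {1..n}" and z: "z \<in> P_set n w M 0 i (run x0 seq t)"
    unfolding legal_seq_def by (metis fst_conv snd_conv)+
  have "\<forall>j\<in>{1..n}. 0 \<le> run x0 seq t j \<and> run x0 seq t j \<le> x0 j"
  proof
    fix j assume j: "j \<in> {1..n}"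
    then have "0 \<le> x0 j" using x0 by simp
    with legal_seq_run_bounds[OF legal x0 _ j, of t] t
    show "0 \<le> run x0 seq t j \<and> run x0 seq t j \<le> x0 j" by auto
  qed
  moreover have "\<forall>j\<in>{1..n}. 0 \<le> w i j" using w i by (simp add: row_stochastic_def)
  ultimately have "lift_to_one n x0 i z
      \<in> P_set n w M 0 i (\<lambda>j. lift_to_one n x0 j (run x0 seq t j))"
    using lift_to_one_in_P_set[OF _ \<open>1 \<le> M\<close> i _ z] by blast
  moreover have "run x0 ?lifted t = (\<lambda>j. lift_to_one n x0 j (run x0 seq t j))"
    by (rule run_map_pointwise) (simp add: lift_to_one_def)
  moreover have "?lifted ! t = (i, lift_to_one n x0 i z)" using t step by simp
  ultimately show "fst (?lifted ! t) \<in> {1..n} \<and>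
      snd (?lifted ! t) \<in> P_set n w M 0 (fst (?lifted ! t)) (run x0 ?lifted t)"
    using i by simp
qed

theorem corollary2:
  fixes n :: nat and M :: int and w :: "nat \<Rightarrow> nat \<Rightarrow> real" and x0 :: "nat \<Rightarrow> int"
  assumes "n \<ge> 1" and "M \<ge> 1" and "row_stochastic n w"
    and "\<forall>i\<in>{1..n}. x0 i \<in> {0..M}"
    and "\<exists>seq. legal_seq n w M 0 x0 seq \<and>
           (\<exists>t \<le> length seq. \<forall>i\<in>{1..n}. run x0 seq t i = 0)"
  shows "\<exists>seq. legal_seq n w M 0 x0 seq \<and>
           (\<exists>t \<le> length seq. \<forall>i\<in>{1..n}. x0 i > 0 \<longrightarrow> run x0 seq t i = 1)"
proof -
  obtain seq t where legal: "legal_seq n w M 0 x0 seq" and t: "t \<le> length seq"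
    and consensus: "\<forall>i\<in>{1..n}. run x0 seq t i = 0"
    using assms(5) by blast
  define lifted where "lifted = map (\<lambda>(i, z). (i, lift_to_one n x0 i z)) seq"
  have lifted_run: "run x0 lifted t = (\<lambda>j. lift_to_one n x0 j (run x0 seq t j))"
    unfolding lifted_def by (rule run_map_pointwise) (simp add: lift_to_one_def)
  have "legal_seq n w M 0 x0 lifted"
    unfolding lifted_def using legal_seq_lift_to_one[OF assms(3,2,4) legal] .
  moreover have "t \<le> length lifted" using t by (simp add: lifted_def)
  moreover have "\<forall>i\<in>{1..n}. x0 i > 0 \<longrightarrow> run x0 lifted t i = 1"
    using consensus by (simp add: lifted_run lift_to_one_def)
  ultimately show ?thesis by blast
qed

end
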